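(* Fix constants $c,C,s_0,s_1,T>0$. Then there exists $N$ (depending only on these constants) such that the following holds for every $n\ge N$. Let $A$ be an $n\times n$ real symmetric positive definite matrix with diagonal entries $a_1<a_2<\dots<a_n$, satisfying $|a_k-a_l|\ge cn$ for $k\ne l$ and $r_k=\sum_{l\ne k}|A(k,l)|\le C$ for all $k$. Let $S$ be an $n\times n$ real symmetric matrix with $s_0\le S(k,k)\le s_1$ for all $k$ and $|S(k,l)|\le s_1/n$ for all $k\ne l$, and let $0<t\le T$. Let $\lambda_1\le\dots\le\lambda_n$ be the eigenvalues of $A$ and $\tilde\lambda_1\le\dots\le\tilde\lambda_n$ the eigenvalues of $A+tS$. Then $$\lambda_1\le\tilde\lambda_1\le\lambda_2\le\tilde\lambda_2\le\cdots\le\lambda_n\le\tilde\lambda_n.$$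
   Context: This formalizes the setting "diagonal separation $\mathcal{O}(n)$, off-diagonal row sums $\mathcal{O}(1)$ for $A$; perturbation $S$ with off-diagonal entries $\mathcal{O}(1/n)$, positive diagonal entries $\mathcal{O}(1)$; $t>0$, $t=\mathcal{O}(1)$". *)

theory Defs
  imports "Jordan_Normal_Form.Char_Poly" "HOL-Library.Multiset"
begin

definition sym_mat :: "nat \<Rightarrow> real mat \<Rightarrow> bool" where
  "sym_mat n A \<longleftrightarrow> A \<in> carrier_mat n n \<and> transpose_mat A = A"

definition pos_def_mat :: "nat \<Rightarrow> real mat \<Rightarrow> bool" where
  "pos_def_mat n A \<longleftrightarrow> A \<in> carrier_mat n n \<and>
     (\<forall>x \<in> carrier_vec n. x \<noteq> 0\<^sub>v n \<longrightarrow> x \<bullet> (A *\<^sub>v x) > 0)"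

(* Eigenvalues (roots of the characteristic polynomial, with algebraic multiplicity)
   listed in non-decreasing order. For a real symmetric n x n matrix this list has length n. *)
definition eigenvalues_sorted :: "real mat \<Rightarrow> real list" where
  "eigenvalues_sorted A = sorted_list_of_multiset (proots (char_poly A))"

end

theory Submission
  imports Defs
begin

text \<open>
  Put separators g 0 < ... < g n halfway between consecutive diagonal entries of A. They are
  about c n / 2 away from every diagonal entry of A and of A + t S, which is much more than the
  O(1) off-diagonal row sums. Hence g k I - M is diagonally dominant for both matrices, so its
  determinant has the sign of the product of its diagonal; this sign flips between g k and
  g (k+1), and the characteristic polynomial has exactly one root in each window. That gives
  n real eigenvalues for each matrix and the inequalities mu_k < g (k+1) < lam_(k+1).

  For lam_k <= mu_k, the eigenvectors v of A and u of A + t S for the k-th window are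
  e_k + O(1/n) entrywise, and symmetry gives (mu_k - lam_k) (u . v) = t (u . S v), where
  u . v is about 1 and u . S v is about S_kk >= s0 > 0.
\<close>

section \<open>Row sums and diagonal dominance\<close>

definition off_diag_row_sum :: "nat \<Rightarrow> real mat \<Rightarrow> nat \<Rightarrow> real" where
  "off_diag_row_sum n M i = (\<Sum>j\<in>{0..<n}-{i}. \<bar>M $$ (i,j)\<bar>)"

lemma off_diag_row_sum_nonneg: "0 \<le> off_diag_row_sum n M i"
  unfolding off_diag_row_sum_def by (rule sum_nonneg) auto

lemma abs_sum_le_of_card_le:
  fixes f :: "'a \<Rightarrow> real"
  assumes "finite A" "card A \<le> n" "\<forall>x\<in>A. \<bar>f x\<bar> \<le> b" "0 \<le> b"
  shows "\<bar>\<Sum>x\<in>A. f x\<bar> \<le> real n * b"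
proof -
  have "\<bar>\<Sum>x\<in>A. f x\<bar> \<le> (\<Sum>x\<in>A. b)" using assms by (intro order_trans[OF sum_abs] sum_mono) auto
  also have "\<dots> \<le> real n * b" using assms by (simp add: mult_right_mono)
  finally show ?thesis .
qed

lemma off_diag_row_sum_le:
  assumes "\<forall>j<n. j \<noteq> i \<longrightarrow> \<bar>M $$ (i,j)\<bar> \<le> b / real n" "0 \<le> b"
  shows "off_diag_row_sum n M i \<le> b"
proof (cases "n = 0")
  case False
  have "off_diag_row_sum n M i = \<bar>\<Sum>j\<in>{0..<n}-{i}. \<bar>M $$ (i,j)\<bar>\<bar>"
    unfolding off_diag_row_sum_def by (simp add: sum_nonneg)
  also have "\<dots> \<le> real n * (b / real n)"
    using assms card_Diff1_le[of "{0..<n}" i] by (intro abs_sum_le_of_card_le) auto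
  finally show ?thesis using False by simp
qed (simp add: off_diag_row_sum_def assms)

lemma off_diag_row_sum_add_smult_le:
  assumes "A \<in> carrier_mat n n" "S \<in> carrier_mat n n" "0 \<le> t" "i < n"
  shows "off_diag_row_sum n (A + t \<cdot>\<^sub>m S) i \<le> off_diag_row_sum n A i + t * off_diag_row_sum n S i"
  unfolding off_diag_row_sum_def sum_distrib_left sum.distrib[symmetric]
  using assms by (intro sum_mono) (auto simp: abs_mult intro: order_trans[OF abs_triangle_ineq])

lemma scalar_prod_split_index:
  assumes "u \<in> carrier_vec n" "v \<in> carrier_vec n" "k < n"
  shows "u \<bullet> v = u $ k * v $ k + (\<Sum>i\<in>{0..<n}-{k}. u $ i * v $ i)"
  using assms by (simp add: scalar_prod_def sum.remove)

lemma ex_max_abs_vec_index: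
  fixes v :: "real vec"
  assumes "n > 0"
  obtains i where "i < n" "\<forall>j<n. \<bar>v $ j\<bar> \<le> \<bar>v $ i\<bar>"
proof -
  let ?m = "Max ((\<lambda>j. \<bar>v $ j\<bar>) ` {..<n})"
  have "?m \<in> (\<lambda>j. \<bar>v $ j\<bar>) ` {..<n}" using assms by (intro Max_in) auto
  then obtain i where "i < n" "\<bar>v $ i\<bar> = ?m" by auto
  then show ?thesis using that by simp
qed

lemma gershgorin_row:
  assumes M: "M \<in> carrier_mat n n" and v: "v \<in> carrier_vec n" and i: "i < n"
    and eig: "(M *\<^sub>v v) $ i = \<nu> * v $ i" and bound: "\<forall>j<n. \<bar>v $ j\<bar> \<le> m"
  shows "\<bar>\<nu> - M $$ (i,i)\<bar> * \<bar>v $ i\<bar> \<le> off_diag_row_sum n M i * m"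
proof -
  have "(M *\<^sub>v v) $ i = M $$ (i,i) * v $ i + (\<Sum>j\<in>{0..<n}-{i}. M $$ (i,j) * v $ j)"
    using scalar_prod_split_index[of "row M i" n v i] M v i by simp
  then have "\<bar>\<nu> - M $$ (i,i)\<bar> * \<bar>v $ i\<bar> = \<bar>\<Sum>j\<in>{0..<n}-{i}. M $$ (i,j) * v $ j\<bar>"
    using eig by (simp add: abs_mult[symmetric] algebra_simps)
  also have "\<dots> \<le> (\<Sum>j\<in>{0..<n}-{i}. \<bar>M $$ (i,j)\<bar> * m)"
    using bound by (intro order_trans[OF sum_abs] sum_mono) (auto simp: abs_mult intro: mult_left_mono)
  also have "\<dots> = off_diag_row_sum n M i * m"
    by (simp add: off_diag_row_sum_def sum_distrib_right)
  finally show ?thesis .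
qed

lemma diag_dominant_det_nonzero:
  fixes X :: "real mat"
  assumes X: "X \<in> carrier_mat n n"
    and dom: "\<forall>i<n. off_diag_row_sum n X i < \<bar>X $$ (i,i)\<bar>"
  shows "det X \<noteq> 0"
proof
  assume "det X = 0"
  then obtain v where v: "v \<in> carrier_vec n" "v \<noteq> 0\<^sub>v n" "X *\<^sub>v v = 0\<^sub>v n"
    using det_0_iff_vec_prod_zero[OF X] by auto
  then have "n > 0" by (cases n) auto
  then obtain i where i: "i < n" and imax: "\<forall>j<n. \<bar>v $ j\<bar> \<le> \<bar>v $ i\<bar>"
    by (rule ex_max_abs_vec_index)
  have "v $ i \<noteq> 0"
  proof
    assume "v $ i = 0"
    then have "v = 0\<^sub>v n" using imax v(1) by (intro eq_vecI) force+
    with v(2) show False ..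
  qed
  have "\<bar>0 - X $$ (i,i)\<bar> * \<bar>v $ i\<bar> \<le> off_diag_row_sum n X i * \<bar>v $ i\<bar>"
    using v i by (intro gershgorin_row[OF X v(1) i _ imax]) simp
  then have "\<bar>X $$ (i,i)\<bar> \<le> off_diag_row_sum n X i" using \<open>v $ i \<noteq> 0\<close> by simp
  with dom i show False by (meson not_less)
qed

section \<open>The sign of a diagonally dominant determinant\<close>

definition scale_off_diag :: "real \<Rightarrow> real mat \<Rightarrow> real mat" where
  "scale_off_diag s X =
     mat (dim_row X) (dim_col X) (\<lambda>(i,j). if i = j then X $$ (i,i) else s * X $$ (i,j))"

lemma scale_off_diag_carrier: "X \<in> carrier_mat n n \<Longrightarrow> scale_off_diag s X \<in> carrier_mat n n"
  by (simp add: scale_off_diag_def)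

lemma det_scale_off_diag_eq:
  assumes X: "X \<in> carrier_mat n n"
  shows "det (scale_off_diag s X) = (\<Sum>p\<in>{p. p permutes {0..<n}}. signof p *
           (\<Prod>i=0..<n. if i = p i then X $$ (i,i) else s * X $$ (i, p i)))"
  unfolding det_def'[OF scale_off_diag_carrier[OF X]]
  using X by (intro sum.cong refl arg_cong[where f = "\<lambda>x. _ * x"] prod.cong)
    (auto simp: scale_off_diag_def permutes_in_image)

lemma det_scale_off_diag_0:
  assumes X: "X \<in> carrier_mat n n"
  shows "det (scale_off_diag 0 X) = (\<Prod>i=0..<n. X $$ (i,i))"
proof -
  have "upper_triangular (scale_off_diag 0 X)"
    using X by (auto simp: upper_triangular_def scale_off_diag_def)
  then have "det (scale_off_diag 0 X) = prod_list (diag_mat (scale_off_diag 0 X))"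
    by (rule det_upper_triangular[OF _ scale_off_diag_carrier[OF X]])
  also have "\<dots> = (\<Prod>i=0..<n. X $$ (i,i))"
    using X by (simp add: prod_list_diag_prod scale_off_diag_def)
  finally show ?thesis .
qed

lemma isCont_det_scale_off_diag:
  assumes "X \<in> carrier_mat n n"
  shows "isCont (\<lambda>s. det (scale_off_diag s X)) s"
  unfolding det_scale_off_diag_eq[OF assms]
  apply (intro continuous_intros)
  subgoal for p i by (cases "i = p i") (auto intro: continuous_intros)
  done

text \<open>Deforming the off-diagonal part to zero keeps the matrix diagonally dominant, hence
  nonsingular, so the determinant keeps the sign it has at the diagonal matrix.\<close>

lemma diag_dominant_det_sign:
  fixes X :: "real mat"
  assumes X: "X \<in> carrier_mat n n"
    and dom: "\<forall>i<n. off_diag_row_sum n X i < \<bar>X $$ (i,i)\<bar>"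
  shows "det X * (\<Prod>i=0..<n. X $$ (i,i)) > 0"
proof -
  define P where "P = (\<Prod>i=0..<n. X $$ (i,i))"
  define f where "f s = det (scale_off_diag s X) * P" for s
  have "X $$ (i,i) \<noteq> 0" if "i < n" for i
    using dom off_diag_row_sum_nonneg[of n X i] that by force
  then have "P \<noteq> 0" unfolding P_def by simp
  have "f 0 = P * P"
    unfolding f_def det_scale_off_diag_0[OF X] P_def ..
  have nonzero: "f s \<noteq> 0" if "0 \<le> s" "s \<le> 1" for s
  proof -
    have "det (scale_off_diag s X) \<noteq> 0"
    proof (intro diag_dominant_det_nonzero[OF scale_off_diag_carrier[OF X]] allI impI)
      fix i assume i: "i < n"
      have "off_diag_row_sum n (scale_off_diag s X) i = s * off_diag_row_sum n X i"
        using X i that unfolding off_diag_row_sum_def sum_distrib_left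
        by (intro sum.cong) (auto simp: scale_off_diag_def abs_mult)
      also have "\<dots> \<le> off_diag_row_sum n X i"
        using that off_diag_row_sum_nonneg by (intro mult_left_le_one_le)
      also have "\<dots> < \<bar>X $$ (i,i)\<bar>" using dom i by simp
      also have "\<dots> = \<bar>scale_off_diag s X $$ (i,i)\<bar>" using X i by (simp add: scale_off_diag_def)
      finally show "off_diag_row_sum n (scale_off_diag s X) i < \<bar>scale_off_diag s X $$ (i,i)\<bar>" .
    qed
    then show ?thesis using \<open>P \<noteq> 0\<close> by (simp add: f_def)
  qed
  have "f 1 > 0"
  proof (rule ccontr)
    assume "\<not> f 1 > 0"
    moreover have "f 0 > 0" using \<open>f 0 = P * P\<close> \<open>P \<noteq> 0\<close> by (metis not_real_square_gt_zero)
    moreover have "isCont f s" for s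
      unfolding f_def using isCont_det_scale_off_diag[OF X] by (intro continuous_intros)
    ultimately obtain s where "0 \<le> s" "s \<le> 1" "f s = 0"
      using IVT2[of f 1 0 0] by force
    with nonzero show False by blast
  qed
  moreover have "scale_off_diag 1 X = X"
    using X by (intro eq_matI) (auto simp: scale_off_diag_def)
  ultimately show ?thesis by (simp add: f_def P_def)
qed

section \<open>Eigenvalues of a matrix with separated diagonal\<close>

text \<open>The points g 0 < g 1 < ... < g n cut the line into n windows; the l-th diagonal entry
  lies in window l, at distance at least D from both of its ends.\<close>

definition diag_separated :: "nat \<Rightarrow> real mat \<Rightarrow> (nat \<Rightarrow> real) \<Rightarrow> real \<Rightarrow> bool" where
  "diag_separated n M g D \<longleftrightarrow>
     (\<forall>k\<le>n. \<forall>l<n. (l < k \<longrightarrow> M $$ (l,l) + D \<le> g k) \<and> (k \<le> l \<longrightarrow> g k + D \<le> M $$ (l,l)))"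

lemma diag_separated_below:
  "diag_separated n M g D \<Longrightarrow> l < k \<Longrightarrow> k \<le> n \<Longrightarrow> M $$ (l,l) + D \<le> g k"
  unfolding diag_separated_def by auto

lemma diag_separated_above:
  "diag_separated n M g D \<Longrightarrow> k \<le> l \<Longrightarrow> l < n \<Longrightarrow> g k + D \<le> M $$ (l,l)"
  unfolding diag_separated_def by auto

lemma diag_separated_mono:
  assumes "diag_separated n M g D" "0 < D" "i \<le> j" "j \<le> n"
  shows "g i \<le> g j"
  using assms(3,4)
proof (induction j rule: dec_induct)
  case (step j)
  with diag_separated_above[OF assms(1), of j j] diag_separated_below[OF assms(1), of j "Suc j"]
    assms(2) show ?case by simp
qed simp

lemma diag_separated_perturb:
  assumes sep: "diag_separated n M g D"
    and diag: "\<forall>l<n. M $$ (l,l) \<le> M' $$ (l,l) \<and> M' $$ (l,l) \<le> M $$ (l,l) + \<delta>"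
  shows "diag_separated n M' g (D - \<delta>)"
  unfolding diag_separated_def
proof (intro allI impI conjI)
  fix k l assume "k \<le> n" "l < n"
  show "M' $$ (l,l) + (D - \<delta>) \<le> g k" if "l < k"
    using diag_separated_below[OF sep that \<open>k \<le> n\<close>] diag \<open>l < n\<close> by force
  show "g k + (D - \<delta>) \<le> M' $$ (l,l)" if "k \<le> l"
    using diag_separated_above[OF sep that \<open>l < n\<close>] diag \<open>l < n\<close> by force
qed

lemma diag_separated_midpoints:
  assumes gap: "\<forall>l k. l < k \<longrightarrow> k < n \<longrightarrow> M $$ (l,l) + 2 * h \<le> M $$ (k,k)" and "0 \<le> h"
  shows "diag_separated n M (\<lambda>k. if k < n then M $$ (k,k) - h else M $$ (n-1, n-1) + h) h"
  unfolding diag_separated_def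
proof (intro allI impI conjI)
  fix k l assume "k \<le> n" "l < n"
  have mono: "M $$ (i,i) \<le> M $$ (j,j)" if "i \<le> j" "j < n" for i j
    using gap[rule_format, of i j] \<open>0 \<le> h\<close> that by (cases "i = j") auto
  show "l < k \<Longrightarrow> M $$ (l,l) + h \<le> (if k < n then M $$ (k,k) - h else M $$ (n-1, n-1) + h)"
    using gap[rule_format, of l k] mono[of l "n - 1"] \<open>k \<le> n\<close> \<open>l < n\<close> by auto
  show "k \<le> l \<Longrightarrow> (if k < n then M $$ (k,k) - h else M $$ (n-1, n-1) + h) + h \<le> M $$ (l,l)"
    using mono[of k l] \<open>l < n\<close> by auto
qed

lemma diag_separated_char_poly_sign:
  assumes M: "M \<in> carrier_mat n n"
    and rows: "\<forall>l<n. off_diag_row_sum n M l \<le> R" and "R < D"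
    and sep: "diag_separated n M g D" and "k \<le> n"
  shows "poly (char_poly M) (g k) * (\<Prod>l=0..<n. g k - M $$ (l,l)) > 0"
proof -
  let ?X = "- char_matrix M (g k)"
  have X: "?X \<in> carrier_mat n n" using M by simp
  have X_index: "?X $$ (i,j) = (if i = j then g k else 0) - M $$ (i,j)" if "i < n" "j < n" for i j
    using M that by (simp add: char_matrix_def)
  have "det ?X * (\<Prod>i=0..<n. ?X $$ (i,i)) > 0"
  proof (intro diag_dominant_det_sign[OF X] allI impI)
    fix i assume i: "i < n"
    have "off_diag_row_sum n ?X i = off_diag_row_sum n M i"
      unfolding off_diag_row_sum_def using i by (intro sum.cong) (auto simp: X_index)
    also have "\<dots> < D" using rows i \<open>R < D\<close> by force
    also have "D \<le> \<bar>?X $$ (i,i)\<bar>"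
      using diag_separated_below[OF sep, of i k] diag_separated_above[OF sep, of k i] \<open>k \<le> n\<close> i
      by (cases "i < k") (auto simp: X_index)
    finally show "off_diag_row_sum n ?X i < \<bar>?X $$ (i,i)\<bar>" .
  qed
  then show ?thesis by (simp add: char_poly_matrix[OF M] X_index)
qed

lemma diag_separated_prod_sign_change:
  assumes sep: "diag_separated n M g D" and "0 < D" and k: "k < n"
  shows "(\<Prod>l=0..<n. g k - M $$ (l,l)) * (\<Prod>l=0..<n. g (Suc k) - M $$ (l,l)) < 0"
proof -
  define f where "f l = (g k - M $$ (l,l)) * (g (Suc k) - M $$ (l,l))" for l
  have "g k + D \<le> M $$ (k,k)" "M $$ (k,k) + D \<le> g (Suc k)"
    using diag_separated_above[OF sep, of k k] diag_separated_below[OF sep, of k "Suc k"] k by auto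
  then have "f k < 0" unfolding f_def using \<open>0 < D\<close> by (intro mult_neg_pos) linarith+
  moreover have "0 < f l" if "l < n" "l \<noteq> k" for l
  proof (cases "l < k")
    case True
    then have "M $$ (l,l) + D \<le> g k" "M $$ (l,l) + D \<le> g (Suc k)"
      using diag_separated_below[OF sep, of l k] diag_separated_below[OF sep, of l "Suc k"] k by auto
    then show ?thesis unfolding f_def using \<open>0 < D\<close> by (intro mult_pos_pos) linarith+
  next
    case False
    with that have "Suc k \<le> l" by simp
    then have "g k + D \<le> M $$ (l,l)" "g (Suc k) + D \<le> M $$ (l,l)"
      using diag_separated_above[OF sep, of k l] diag_separated_above[OF sep, of "Suc k" l] that by auto
    then show ?thesis unfolding f_def using \<open>0 < D\<close> by (intro mult_neg_neg) linarith+
  qed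
  ultimately have "f k * (\<Prod>l\<in>{0..<n}-{k}. f l) < 0"
    by (intro mult_neg_pos prod_pos) auto
  also have "f k * (\<Prod>l\<in>{0..<n}-{k}. f l) = (\<Prod>l=0..<n. f l)"
    using k by (simp add: prod.remove)
  finally show ?thesis by (simp add: f_def prod.distrib)
qed

lemma sorted_list_of_multiset_proots_eq:
  fixes p :: "real poly"
  assumes "p \<noteq> 0" "degree p \<le> length xs" "sorted xs" "distinct xs" "\<forall>x\<in>set xs. poly p x = 0"
  shows "sorted_list_of_multiset (proots p) = xs"
proof -
  have "mset xs = mset_set (set xs)" using assms(4) by (simp add: mset_set_set)
  also have "\<dots> \<subseteq># mset_set (set_mset (proots p))"
    using assms(1,5) poly_roots_finite[of p] by (intro subset_imp_msubset_mset_set) auto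
  also have "\<dots> \<subseteq># proots p" by (rule mset_set_set_mset_msubset)
  finally have sub: "mset xs \<subseteq># proots p" .
  moreover have "size (proots p) \<le> size (mset xs)"
    using size_proots_le[of p] assms(2) by simp
  ultimately have "mset xs = proots p"
    by (metis mset_subset_size subset_mset.le_less leD)
  then show ?thesis using assms(3) by (metis sorted_list_of_multiset_mset sorted_sort_id)
qed

lemma eigenvalue_eigenvalues_sorted:
  assumes M: "M \<in> carrier_mat n n" and "k < length (eigenvalues_sorted M)"
  shows "eigenvalue M (eigenvalues_sorted M ! k)"
proof -
  have "char_poly M \<noteq> 0" using degree_monic_char_poly[OF M] by auto
  then show ?thesis
    using nth_mem[OF assms(2)] unfolding eigenvalue_root_char_poly[OF M] eigenvalues_sorted_def
    by simp
qed

lemma diag_separated_char_poly_root: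
  assumes M: "M \<in> carrier_mat n n"
    and rows: "\<forall>l<n. off_diag_row_sum n M l \<le> R" and "R < D"
    and sep: "diag_separated n M g D" and k: "k < n"
  obtains r where "g k < r" "r < g (Suc k)" "poly (char_poly M) r = 0"
proof -
  let ?p = "char_poly M"
  have "0 < D" using rows k \<open>R < D\<close> off_diag_row_sum_nonneg[of n M k] by force
  have "0 < (poly ?p (g k) * (\<Prod>l=0..<n. g k - M $$ (l,l)))
            * (poly ?p (g (Suc k)) * (\<Prod>l=0..<n. g (Suc k) - M $$ (l,l)))"
    using k by (intro mult_pos_pos diag_separated_char_poly_sign[OF M rows \<open>R < D\<close> sep]) auto
  then have "0 < (poly ?p (g k) * poly ?p (g (Suc k)))
            * ((\<Prod>l=0..<n. g k - M $$ (l,l)) * (\<Prod>l=0..<n. g (Suc k) - M $$ (l,l)))"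
    by (simp only: ac_simps)
  moreover have "\<And>x y :: real. 0 < x * y \<Longrightarrow> y < 0 \<Longrightarrow> x < 0"
    by (auto simp: zero_less_mult_iff)
  ultimately have "poly ?p (g k) * poly ?p (g (Suc k)) < 0"
    using diag_separated_prod_sign_change[OF sep \<open>0 < D\<close> k] by blast
  moreover have "g k < g (Suc k)"
    using diag_separated_above[OF sep, of k k] diag_separated_below[OF sep, of k "Suc k"] \<open>0 < D\<close> k
    by simp
  ultimately show ?thesis using poly_IVT that by blast
qed

lemma eigenvalues_sorted_separated:
  assumes M: "M \<in> carrier_mat n n"
    and rows: "\<forall>l<n. off_diag_row_sum n M l \<le> R" and "R < D"
    and sep: "diag_separated n M g D"
  shows "length (eigenvalues_sorted M) = n"
    and "k < n \<Longrightarrow> g k < eigenvalues_sorted M ! k \<and> eigenvalues_sorted M ! k < g (Suc k)"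
proof -
  have "\<exists>r. g k < r \<and> r < g (Suc k) \<and> poly (char_poly M) r = 0" if "k < n" for k
    using diag_separated_char_poly_root[OF M rows \<open>R < D\<close> sep that] by blast
  then obtain r where r: "\<And>k. k < n \<Longrightarrow> g k < r k \<and> r k < g (Suc k) \<and> poly (char_poly M) (r k) = 0"
    by metis
  have r_less: "r i < r j" if "i < j" "j < n" for i j
  proof -
    have "0 < D" using rows that \<open>R < D\<close> off_diag_row_sum_nonneg[of n M 0] by force
    have "r i < g (Suc i)" using r that by auto
    also have "\<dots> \<le> g j" using diag_separated_mono[OF sep \<open>0 < D\<close>] that by auto
    also have "\<dots> < r j" using r that by auto
    finally show ?thesis .
  qed
  define xs where "xs = map r [0..<n]"
  have "sorted xs" unfolding xs_def sorted_iff_nth_mono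
    by (auto simp: le_less intro: less_imp_le r_less)
  moreover have "distinct xs" unfolding xs_def distinct_map
    by (auto simp: inj_on_def) (metis linorder_neqE_nat less_irrefl r_less)
  moreover have "degree (char_poly M) = n" "char_poly M \<noteq> 0"
    using degree_monic_char_poly[OF M] by auto
  ultimately have "eigenvalues_sorted M = xs"
    unfolding eigenvalues_sorted_def using r
    by (intro sorted_list_of_multiset_proots_eq) (auto simp: xs_def)
  then show "length (eigenvalues_sorted M) = n"
    and "k < n \<Longrightarrow> g k < eigenvalues_sorted M ! k \<and> eigenvalues_sorted M ! k < g (Suc k)"
    using r by (auto simp: xs_def)
qed

section \<open>Localised eigenvectors and the perturbation\<close>

definition near_unit_vec :: "nat \<Rightarrow> nat \<Rightarrow> real \<Rightarrow> real vec \<Rightarrow> bool" where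
  "near_unit_vec n k \<epsilon> w \<longleftrightarrow> w \<in> carrier_vec n \<and> w $ k = 1 \<and> (\<forall>l<n. l \<noteq> k \<longrightarrow> \<bar>w $ l\<bar> \<le> \<epsilon>)"

lemma eigenvector_concentrated:
  assumes M: "M \<in> carrier_mat n n" and w: "w \<in> carrier_vec n" and eig: "M *\<^sub>v w = \<nu> \<cdot>\<^sub>v w"
    and rows: "\<forall>l<n. off_diag_row_sum n M l \<le> R" and "R < D" and k: "k < n"
    and far: "\<forall>l<n. l \<noteq> k \<longrightarrow> D \<le> \<bar>\<nu> - M $$ (l,l)\<bar>"
  shows "\<forall>l<n. l \<noteq> k \<longrightarrow> \<bar>w $ l\<bar> \<le> R / D * \<bar>w $ k\<bar>"
proof -
  have "0 \<le> R" using rows k off_diag_row_sum_nonneg[of n M k] by force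
  with \<open>R < D\<close> have "0 < D" by simp
  obtain m where m: "m < n" and mmax: "\<forall>j<n. \<bar>w $ j\<bar> \<le> \<bar>w $ m\<bar>"
    using ex_max_abs_vec_index[of n w] k by auto
  have bound: "\<bar>w $ l\<bar> \<le> R / D * \<bar>w $ m\<bar>" if l: "l < n" "l \<noteq> k" for l
  proof -
    have "D * \<bar>w $ l\<bar> \<le> \<bar>\<nu> - M $$ (l,l)\<bar> * \<bar>w $ l\<bar>" using far l by (intro mult_right_mono) auto
    also have "\<dots> \<le> off_diag_row_sum n M l * \<bar>w $ m\<bar>"
      using eig w l by (intro gershgorin_row[OF M w l(1) _ mmax]) simp
    also have "\<dots> \<le> R * \<bar>w $ m\<bar>" using rows l by (intro mult_right_mono) auto
    finally show ?thesis using \<open>0 < D\<close> by (simp add: field_simps)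
  qed
  show ?thesis
  proof (cases "m = k")
    case False
    then have "\<bar>w $ m\<bar> \<le> R / D * \<bar>w $ m\<bar>" using bound m by auto
    moreover have "R / D < 1" using \<open>R < D\<close> \<open>0 < D\<close> by simp
    ultimately have "\<bar>w $ m\<bar> * (1 - R / D) \<le> 0" "0 < 1 - R / D"
      by (simp_all add: algebra_simps)
    then have "w $ m = 0" by (simp add: mult_le_0_iff)
    then have "w $ l = 0" if "l < n" for l using mmax that by fastforce
    moreover have "0 \<le> R / D * \<bar>w $ k\<bar>" using \<open>0 \<le> R\<close> \<open>0 < D\<close> by simp
    ultimately show ?thesis by simp
  qed (use bound in auto)
qed

lemma eigenvector_near_unit_vec:
  assumes M: "M \<in> carrier_mat n n"
    and rows: "\<forall>l<n. off_diag_row_sum n M l \<le> R" and "R < D"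
    and sep: "diag_separated n M g D" and k: "k < n"
  obtains w where "near_unit_vec n k (R / D) w" "M *\<^sub>v w = eigenvalues_sorted M ! k \<cdot>\<^sub>v w"
proof -
  define \<nu> where "\<nu> = eigenvalues_sorted M ! k"
  have window: "g k < \<nu>" "\<nu> < g (Suc k)"
    using eigenvalues_sorted_separated[OF M rows \<open>R < D\<close> sep] k unfolding \<nu>_def by auto
  have "eigenvalue M \<nu>"
    unfolding \<nu>_def using eigenvalues_sorted_separated(1)[OF M rows \<open>R < D\<close> sep] k
    by (intro eigenvalue_eigenvalues_sorted[OF M]) auto
  from find_eigenvector[OF M this] obtain v where
    v: "v \<in> carrier_vec n" "v \<noteq> 0\<^sub>v n" "M *\<^sub>v v = \<nu> \<cdot>\<^sub>v v"
    unfolding eigenvector_def using M by auto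
  have far: "\<forall>l<n. l \<noteq> k \<longrightarrow> D \<le> \<bar>\<nu> - M $$ (l,l)\<bar>"
  proof (intro allI impI)
    fix l assume "l < n" "l \<noteq> k"
    show "D \<le> \<bar>\<nu> - M $$ (l,l)\<bar>"
    proof (cases "l < k")
      case True
      then show ?thesis using diag_separated_below[OF sep True] k window by simp
    next
      case False
      with \<open>l \<noteq> k\<close> have "Suc k \<le> l" by simp
      then show ?thesis using diag_separated_above[OF sep _ \<open>l < n\<close>] window by force
    qed
  qed
  have bound: "\<forall>l<n. l \<noteq> k \<longrightarrow> \<bar>v $ l\<bar> \<le> R / D * \<bar>v $ k\<bar>"
    by (rule eigenvector_concentrated[OF M v(1) v(3) rows \<open>R < D\<close> k far])
  have "v $ k \<noteq> 0"
  proof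
    assume "v $ k = 0"
    then have "v = 0\<^sub>v n" using bound v(1) by (intro eq_vecI) force+
    with v(2) show False ..
  qed
  show ?thesis
  proof (rule that[of "(1 / v $ k) \<cdot>\<^sub>v v"])
    show "near_unit_vec n k (R / D) ((1 / v $ k) \<cdot>\<^sub>v v)"
      unfolding near_unit_vec_def using v(1) k bound \<open>v $ k \<noteq> 0\<close>
      by (auto simp: divide_le_eq)
    show "M *\<^sub>v ((1 / v $ k) \<cdot>\<^sub>v v) = eigenvalues_sorted M ! k \<cdot>\<^sub>v ((1 / v $ k) \<cdot>\<^sub>v v)"
      using mult_mat_vec[OF M v(1)] v(3) unfolding \<nu>_def[symmetric]
      by (simp add: smult_smult_assoc mult.commute)
  qed
qed

lemma scalar_prod_near_unit_vec_ge:
  assumes u: "near_unit_vec n k \<epsilon> u" and v: "near_unit_vec n k \<epsilon> v" and "k < n" "0 \<le> \<epsilon>"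
  shows "1 - real n * \<epsilon>\<^sup>2 \<le> u \<bullet> v"
proof -
  have "\<bar>\<Sum>i\<in>{0..<n}-{k}. u $ i * v $ i\<bar> \<le> real n * (\<epsilon> * \<epsilon>)"
    using u v card_Diff1_le[of "{0..<n}" k] \<open>0 \<le> \<epsilon>\<close> unfolding near_unit_vec_def
    by (intro abs_sum_le_of_card_le) (auto simp: abs_mult intro!: mult_mono)
  then show ?thesis
    using u v \<open>k < n\<close> unfolding near_unit_vec_def
    by (simp add: scalar_prod_split_index[of u n v k] power2_eq_square abs_le_iff)
qed

text \<open>For u, v = e_k + O(\<epsilon>) one has (S v)_k = S_kk + O(s1 \<epsilon>) and (S v)_i = O(s1/n + s1 \<epsilon>) for
  i \<noteq> k.\<close>

lemma quadratic_form_near_unit_vec_ge: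
  assumes u: "near_unit_vec n k \<epsilon> u" and v: "near_unit_vec n k \<epsilon> v" and k: "k < n" and "0 \<le> \<epsilon>"
    and S: "S \<in> carrier_mat n n" and "s\<^sub>0 \<le> S $$ (k,k)" and diag: "\<forall>i<n. \<bar>S $$ (i,i)\<bar> \<le> s\<^sub>1"
    and off: "\<forall>i<n. \<forall>j<n. i \<noteq> j \<longrightarrow> \<bar>S $$ (i,j)\<bar> \<le> s\<^sub>1 / real n"
  shows "s\<^sub>0 - 2 * s\<^sub>1 * \<epsilon> - 2 * real n * s\<^sub>1 * \<epsilon>\<^sup>2 \<le> u \<bullet> (S *\<^sub>v v)"
proof -
  have "0 \<le> s\<^sub>1" using diag k by force
  have carrier: "u \<in> carrier_vec n" "v \<in> carrier_vec n" "S *\<^sub>v v \<in> carrier_vec n"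
    using u v S unfolding near_unit_vec_def by auto
  have off_rows: "off_diag_row_sum n S i \<le> s\<^sub>1" if "i < n" for i
    using off that \<open>0 \<le> s\<^sub>1\<close> by (intro off_diag_row_sum_le) auto
  define E where "E i = (\<Sum>j\<in>{0..<n}-{k}. S $$ (i,j) * v $ j)" for i
  have Sv: "(S *\<^sub>v v) $ i = S $$ (i,k) + E i" if "i < n" for i
    using scalar_prod_split_index[of "row S i" n v k] S v k that
    unfolding E_def near_unit_vec_def by simp
  have E_le: "\<bar>E i\<bar> \<le> off_diag_row_sum n S i * \<epsilon> + \<bar>S $$ (i,i)\<bar> * \<epsilon>" if "i < n" for i
  proof -
    have "\<bar>E i\<bar> \<le> (\<Sum>j\<in>{0..<n}-{k}. \<bar>S $$ (i,j)\<bar> * \<epsilon>)"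
      unfolding E_def using v \<open>0 \<le> \<epsilon>\<close> unfolding near_unit_vec_def
      by (intro order_trans[OF sum_abs] sum_mono) (auto simp: abs_mult intro: mult_left_mono)
    also have "\<dots> \<le> (\<Sum>j\<in>{0..<n}. \<bar>S $$ (i,j)\<bar> * \<epsilon>)"
      using \<open>0 \<le> \<epsilon>\<close> by (intro sum_mono2) auto
    also have "\<dots> = off_diag_row_sum n S i * \<epsilon> + \<bar>S $$ (i,i)\<bar> * \<epsilon>"
      using that by (simp add: off_diag_row_sum_def sum.remove sum_distrib_right)
    finally show ?thesis .
  qed
  have Ek: "\<bar>E k\<bar> \<le> s\<^sub>1 * \<epsilon>"
  proof -
    have "\<bar>E k\<bar> \<le> real n * (s\<^sub>1 / real n * \<epsilon>)"
      unfolding E_def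
    proof (intro abs_sum_le_of_card_le ballI)
      fix j assume "j \<in> {0..<n}-{k}"
      then have "\<bar>S $$ (k,j)\<bar> \<le> s\<^sub>1 / real n" "\<bar>v $ j\<bar> \<le> \<epsilon>"
        using off v k unfolding near_unit_vec_def by auto
      then show "\<bar>S $$ (k,j) * v $ j\<bar> \<le> s\<^sub>1 / real n * \<epsilon>"
        unfolding abs_mult by (rule mult_mono) (use \<open>0 \<le> s\<^sub>1\<close> in auto)
    qed (use card_Diff1_le[of "{0..<n}" k] \<open>0 \<le> s\<^sub>1\<close> \<open>0 \<le> \<epsilon>\<close> in auto)
    then show ?thesis using k by simp
  qed
  have rest: "\<bar>\<Sum>i\<in>{0..<n}-{k}. u $ i * (S *\<^sub>v v) $ i\<bar> \<le> real n * (\<epsilon> * (s\<^sub>1 / real n + 2 * s\<^sub>1 * \<epsilon>))"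
  proof (intro abs_sum_le_of_card_le ballI)
    fix i assume i: "i \<in> {0..<n}-{k}"
    then have "i < n" "i \<noteq> k" by auto
    have "\<bar>E i\<bar> \<le> off_diag_row_sum n S i * \<epsilon> + \<bar>S $$ (i,i)\<bar> * \<epsilon>" by (rule E_le[OF \<open>i < n\<close>])
    also have "\<dots> \<le> s\<^sub>1 * \<epsilon> + s\<^sub>1 * \<epsilon>"
      using off_rows[of i] diag \<open>i < n\<close> \<open>0 \<le> \<epsilon>\<close> by (intro add_mono mult_right_mono) auto
    also have "\<dots> = 2 * s\<^sub>1 * \<epsilon>" by (simp add: algebra_simps)
    finally have "\<bar>E i\<bar> \<le> 2 * s\<^sub>1 * \<epsilon>" .
    moreover have "\<bar>S $$ (i,k)\<bar> \<le> s\<^sub>1 / real n" using off \<open>i < n\<close> \<open>i \<noteq> k\<close> k by auto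
    moreover have "\<bar>(S *\<^sub>v v) $ i\<bar> \<le> \<bar>S $$ (i,k)\<bar> + \<bar>E i\<bar>"
      unfolding Sv[OF \<open>i < n\<close>] by (rule abs_triangle_ineq)
    ultimately have "\<bar>(S *\<^sub>v v) $ i\<bar> \<le> s\<^sub>1 / real n + 2 * s\<^sub>1 * \<epsilon>" by linarith
    then show "\<bar>u $ i * (S *\<^sub>v v) $ i\<bar> \<le> \<epsilon> * (s\<^sub>1 / real n + 2 * s\<^sub>1 * \<epsilon>)"
      using u i unfolding near_unit_vec_def by (auto simp: abs_mult intro!: mult_mono)
  qed (use card_Diff1_le[of "{0..<n}" k] \<open>0 \<le> s\<^sub>1\<close> \<open>0 \<le> \<epsilon>\<close> in auto)
  have eq: "real n * (\<epsilon> * (s\<^sub>1 / real n + 2 * s\<^sub>1 * \<epsilon>)) = s\<^sub>1 * \<epsilon> + 2 * real n * s\<^sub>1 * \<epsilon>\<^sup>2"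
    using k by (simp add: field_simps power2_eq_square)
  have "- (\<Sum>i\<in>{0..<n}-{k}. u $ i * (S *\<^sub>v v) $ i) \<le> s\<^sub>1 * \<epsilon> + 2 * real n * s\<^sub>1 * \<epsilon>\<^sup>2"
    using abs_le_D2[OF rest] unfolding eq .
  moreover have "u \<bullet> (S *\<^sub>v v) = S $$ (k,k) + E k + (\<Sum>i\<in>{0..<n}-{k}. u $ i * (S *\<^sub>v v) $ i)"
    using scalar_prod_split_index[OF carrier(1,3) k] Sv[OF k] u unfolding near_unit_vec_def by simp
  moreover have "2 * s\<^sub>1 * \<epsilon> = s\<^sub>1 * \<epsilon> + s\<^sub>1 * \<epsilon>" by simp
  ultimately show ?thesis
    using abs_le_D2[OF Ek] \<open>s\<^sub>0 \<le> S $$ (k,k)\<close> by linarith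
qed

lemma perturbed_eigenvalue_identity:
  assumes A: "sym_mat n A" and S: "sym_mat n S" and u: "u \<in> carrier_vec n" and v: "v \<in> carrier_vec n"
    and eigA: "A *\<^sub>v v = lam \<cdot>\<^sub>v v" and eigB: "(A + t \<cdot>\<^sub>m S) *\<^sub>v u = \<mu> \<cdot>\<^sub>v u"
  shows "\<mu> * (u \<bullet> v) = lam * (u \<bullet> v) + t * (u \<bullet> (S *\<^sub>v v))"
proof -
  let ?B = "A + t \<cdot>\<^sub>m S"
  have carrier: "A \<in> carrier_mat n n" "S \<in> carrier_mat n n" "?B \<in> carrier_mat n n"
    using A S unfolding sym_mat_def by auto
  have "transpose_mat (t \<cdot>\<^sub>m S) = t \<cdot>\<^sub>m transpose_mat S"
    by (intro eq_matI) auto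
  then have "transpose_mat ?B = ?B"
    using A S carrier unfolding sym_mat_def by (simp add: transpose_add)
  have "(t \<cdot>\<^sub>m S) *\<^sub>v v = t \<cdot>\<^sub>v (S *\<^sub>v v)"
    using carrier v by (intro eq_vecI) (auto simp: row_smult)
  then have Bv: "?B *\<^sub>v v = lam \<cdot>\<^sub>v v + t \<cdot>\<^sub>v (S *\<^sub>v v)"
    using add_mult_distrib_mat_vec[OF carrier(1) _ v, of "t \<cdot>\<^sub>m S"] carrier eigA by simp
  have "\<mu> * (u \<bullet> v) = (?B *\<^sub>v u) \<bullet> v" using eigB u v by simp
  also have "\<dots> = u \<bullet> (?B *\<^sub>v v)"
    using transpose_vec_mult_scalar[OF carrier(3) v u] \<open>transpose_mat ?B = ?B\<close> by simp
  also have "\<dots> = lam * (u \<bullet> v) + t * (u \<bullet> (S *\<^sub>v v))"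
    using carrier u v unfolding Bv by (simp add: scalar_prod_add_distrib[of _ n])
  finally show ?thesis .
qed

lemma eigenvalue_lt_perturbed:
  assumes A: "sym_mat n A" and S: "sym_mat n S"
    and v: "near_unit_vec n k \<epsilon> v" and eigA: "A *\<^sub>v v = lam \<cdot>\<^sub>v v"
    and u: "near_unit_vec n k \<epsilon> u" and eigB: "(A + t \<cdot>\<^sub>m S) *\<^sub>v u = \<mu> \<cdot>\<^sub>v u"
    and k: "k < n" and "0 \<le> \<epsilon>" and "0 < t"
    and "s\<^sub>0 \<le> S $$ (k,k)" and diag: "\<forall>i<n. \<bar>S $$ (i,i)\<bar> \<le> s\<^sub>1"
    and off: "\<forall>i<n. \<forall>j<n. i \<noteq> j \<longrightarrow> \<bar>S $$ (i,j)\<bar> \<le> s\<^sub>1 / real n"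
    and small: "2 * s\<^sub>1 * \<epsilon> + 2 * real n * s\<^sub>1 * \<epsilon>\<^sup>2 < s\<^sub>0" "real n * \<epsilon>\<^sup>2 < 1"
  shows "lam < \<mu>"
proof -
  have carrier: "S \<in> carrier_mat n n" "u \<in> carrier_vec n" "v \<in> carrier_vec n"
    using S u v unfolding sym_mat_def near_unit_vec_def by auto
  have "0 < u \<bullet> v"
    using scalar_prod_near_unit_vec_ge[OF u v k \<open>0 \<le> \<epsilon>\<close>] small(2) by linarith
  moreover have "0 < u \<bullet> (S *\<^sub>v v)"
    using quadratic_form_near_unit_vec_ge[OF u v k \<open>0 \<le> \<epsilon>\<close> carrier(1) \<open>s\<^sub>0 \<le> S $$ (k,k)\<close> diag off]
      small(1) by linarith
  moreover have "(\<mu> - lam) * (u \<bullet> v) = t * (u \<bullet> (S *\<^sub>v v))"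
    using perturbed_eigenvalue_identity[OF A S carrier(2,3) eigA eigB] by (simp add: algebra_simps)
  ultimately show ?thesis
    using \<open>0 < t\<close> by (metis diff_gt_0_iff_gt mult_pos_pos zero_less_mult_pos2)
qed

lemma perturbed_eigenvalues_interlace:
  fixes A S :: "real mat" and t :: real
  defines "B \<equiv> A + t \<cdot>\<^sub>m S"
  assumes A: "sym_mat n A" and S: "sym_mat n S"
    and rowsA: "\<forall>l<n. off_diag_row_sum n A l \<le> R" and rowsB: "\<forall>l<n. off_diag_row_sum n B l \<le> R"
    and "R < D" and sepA: "diag_separated n A g D" and sepB: "diag_separated n B g D"
    and "0 < t" and "0 \<le> s\<^sub>0" and diagS: "\<forall>k<n. s\<^sub>0 \<le> S $$ (k,k) \<and> S $$ (k,k) \<le> s\<^sub>1"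
    and offS: "\<forall>k<n. \<forall>l<n. k \<noteq> l \<longrightarrow> \<bar>S $$ (k,l)\<bar> \<le> s\<^sub>1 / real n"
    and small: "2 * s\<^sub>1 * (R / D) + 2 * real n * s\<^sub>1 * (R / D)\<^sup>2 < s\<^sub>0" "real n * (R / D)\<^sup>2 < 1"
  shows "length (eigenvalues_sorted A) = n" "length (eigenvalues_sorted B) = n"
    and "k < n \<Longrightarrow> eigenvalues_sorted A ! k < eigenvalues_sorted B ! k"
    and "Suc k < n \<Longrightarrow> eigenvalues_sorted B ! k < eigenvalues_sorted A ! Suc k"
proof -
  have carrier: "A \<in> carrier_mat n n" "B \<in> carrier_mat n n"
    using A S unfolding sym_mat_def B_def by auto
  note EA = eigenvalues_sorted_separated[OF carrier(1) rowsA \<open>R < D\<close> sepA]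
  note EB = eigenvalues_sorted_separated[OF carrier(2) rowsB \<open>R < D\<close> sepB]
  show "length (eigenvalues_sorted A) = n" "length (eigenvalues_sorted B) = n"
    using EA(1) EB(1) .
  show "Suc k < n \<Longrightarrow> eigenvalues_sorted B ! k < eigenvalues_sorted A ! Suc k"
    using EA(2)[of "Suc k"] EB(2)[of k] by force
  assume k: "k < n"
  have "0 \<le> R / D"
    using rowsA k \<open>R < D\<close> off_diag_row_sum_nonneg[of n A k] by force
  obtain v where v: "near_unit_vec n k (R / D) v" "A *\<^sub>v v = eigenvalues_sorted A ! k \<cdot>\<^sub>v v"
    using eigenvector_near_unit_vec[OF carrier(1) rowsA \<open>R < D\<close> sepA k] .
  obtain u where u: "near_unit_vec n k (R / D) u" "B *\<^sub>v u = eigenvalues_sorted B ! k \<cdot>\<^sub>v u"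
    using eigenvector_near_unit_vec[OF carrier(2) rowsB \<open>R < D\<close> sepB k] .
  have eigB: "(A + t \<cdot>\<^sub>m S) *\<^sub>v u = eigenvalues_sorted B ! k \<cdot>\<^sub>v u"
    using u(2) by (simp add: B_def)
  have "s\<^sub>0 \<le> S $$ (k,k)" using diagS k by blast
  moreover have "\<forall>i<n. \<bar>S $$ (i,i)\<bar> \<le> s\<^sub>1"
    using diagS \<open>0 \<le> s\<^sub>0\<close> by (auto simp: abs_le_iff)
  ultimately show "eigenvalues_sorted A ! k < eigenvalues_sorted B ! k"
    using eigenvalue_lt_perturbed[OF A S v u(1) eigB k \<open>0 \<le> R / D\<close> \<open>0 < t\<close> _ _ offS small] by blast
qed

lemma sorted_diag_gap:
  fixes M :: "real mat"
  assumes incr: "\<forall>k. Suc k < n \<longrightarrow> M $$ (k,k) < M $$ (Suc k, Suc k)"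
    and gap: "\<forall>k<n. \<forall>l<n. k \<noteq> l \<longrightarrow> d \<le> \<bar>M $$ (k,k) - M $$ (l,l)\<bar>"
  shows "\<forall>l k. l < k \<longrightarrow> k < n \<longrightarrow> M $$ (l,l) + d \<le> M $$ (k,k)"
proof (intro allI impI)
  fix l k assume "l < k" "k < n"
  then have "M $$ (l,l) < M $$ (k,k)"
  proof (induction k)
    case (Suc k)
    have step: "M $$ (k,k) < M $$ (Suc k, Suc k)" using incr Suc.prems by blast
    show ?case
    proof (cases "l = k")
      case False
      with Suc have "M $$ (l,l) < M $$ (k,k)" by simp
      with step show ?thesis by linarith
    qed (use step in simp)
  qed simp
  moreover have "d \<le> \<bar>M $$ (k,k) - M $$ (l,l)\<bar>" using gap[rule_format, of k l] \<open>l < k\<close> \<open>k < n\<close> by simp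
  ultimately show "M $$ (l,l) + d \<le> M $$ (k,k)" by (simp add: abs_of_pos)
qed

lemma eigenvalues_interlace_of_diag_gap:
  fixes A S :: "real mat" and n :: nat and c C s\<^sub>0 s\<^sub>1 T t :: real
  defines "D \<equiv> c * real n / 2 - T * s\<^sub>1"
  assumes "0 < c" "0 \<le> s\<^sub>0"
    and A: "sym_mat n A" and incr: "\<forall>k. Suc k < n \<longrightarrow> A $$ (k, k) < A $$ (Suc k, Suc k)"
    and gap: "\<forall>k<n. \<forall>l<n. k \<noteq> l \<longrightarrow> \<bar>A $$ (k, k) - A $$ (l, l)\<bar> \<ge> c * real n"
    and rows: "\<forall>k<n. (\<Sum>l\<in>{0..<n} - {k}. \<bar>A $$ (k, l)\<bar>) \<le> C"
    and S: "sym_mat n S" and diagS: "\<forall>k<n. s\<^sub>0 \<le> S $$ (k, k) \<and> S $$ (k, k) \<le> s\<^sub>1"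
    and offS: "\<forall>k<n. \<forall>l<n. k \<noteq> l \<longrightarrow> \<bar>S $$ (k, l)\<bar> \<le> s\<^sub>1 / real n"
    and "0 < t" "t \<le> T"
    and "C + T * s\<^sub>1 < D"
    and small: "2 * s\<^sub>1 * ((C + T * s\<^sub>1) / D) + 2 * real n * s\<^sub>1 * ((C + T * s\<^sub>1) / D)\<^sup>2 < s\<^sub>0"
      "real n * ((C + T * s\<^sub>1) / D)\<^sup>2 < 1"
  shows "length (eigenvalues_sorted A) = n" "length (eigenvalues_sorted (A + t \<cdot>\<^sub>m S)) = n"
    and "k < n \<Longrightarrow> eigenvalues_sorted A ! k < eigenvalues_sorted (A + t \<cdot>\<^sub>m S) ! k"
    and "Suc k < n \<Longrightarrow> eigenvalues_sorted (A + t \<cdot>\<^sub>m S) ! k < eigenvalues_sorted A ! Suc k"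
proof -
  define h where "h = c * real n / 2"
  define g where "g k = (if k < n then A $$ (k,k) - h else A $$ (n-1, n-1) + h)" for k
  have carrier: "A \<in> carrier_mat n n" "S \<in> carrier_mat n n"
    using A S unfolding sym_mat_def by auto
  have "0 \<le> h" using \<open>0 < c\<close> by (simp add: h_def)
  have "\<forall>l k. l < k \<longrightarrow> k < n \<longrightarrow> A $$ (l,l) + 2 * h \<le> A $$ (k,k)"
    using sorted_diag_gap[OF incr] gap by (simp add: h_def)
  then have sep: "diag_separated n A g h"
    unfolding g_def by (rule diag_separated_midpoints[OF _ \<open>0 \<le> h\<close>])
  have tS: "0 \<le> t * S $$ (l,l) \<and> t * S $$ (l,l) \<le> T * s\<^sub>1" if "l < n" for l
  proof -
    have "s\<^sub>0 \<le> S $$ (l,l)" "S $$ (l,l) \<le> s\<^sub>1" using diagS that by auto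
    then show ?thesis using \<open>0 < t\<close> \<open>t \<le> T\<close> \<open>0 \<le> s\<^sub>0\<close> by (auto intro: mult_mono)
  qed
  have rowsA: "off_diag_row_sum n A l \<le> C" if "l < n" for l
    using rows that by (simp add: off_diag_row_sum_def)
  have sepA: "diag_separated n A g D"
  proof -
    have "\<forall>l<n. A $$ (l,l) \<le> A $$ (l,l) \<and> A $$ (l,l) \<le> A $$ (l,l) + T * s\<^sub>1"
    proof (intro allI impI)
      fix l assume "l < n"
      with tS[OF this] show "A $$ (l,l) \<le> A $$ (l,l) \<and> A $$ (l,l) \<le> A $$ (l,l) + T * s\<^sub>1" by linarith
    qed
    then show ?thesis using diag_separated_perturb[OF sep] by (simp add: D_def h_def)
  qed
  have sepB: "diag_separated n (A + t \<cdot>\<^sub>m S) g D"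
  proof -
    have "\<forall>l<n. A $$ (l,l) \<le> (A + t \<cdot>\<^sub>m S) $$ (l,l) \<and> (A + t \<cdot>\<^sub>m S) $$ (l,l) \<le> A $$ (l,l) + T * s\<^sub>1"
    proof (intro allI impI)
      fix l assume "l < n"
      with carrier tS[OF this]
      show "A $$ (l,l) \<le> (A + t \<cdot>\<^sub>m S) $$ (l,l) \<and> (A + t \<cdot>\<^sub>m S) $$ (l,l) \<le> A $$ (l,l) + T * s\<^sub>1"
        by simp
    qed
    then show ?thesis using diag_separated_perturb[OF sep] by (simp add: D_def h_def)
  qed
  have rowsA': "\<forall>l<n. off_diag_row_sum n A l \<le> C + T * s\<^sub>1"
  proof (intro allI impI)
    fix l assume "l < n"
    with rowsA[OF this] tS[OF this] show "off_diag_row_sum n A l \<le> C + T * s\<^sub>1" by linarith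
  qed
  have rowsB: "\<forall>l<n. off_diag_row_sum n (A + t \<cdot>\<^sub>m S) l \<le> C + T * s\<^sub>1"
  proof (intro allI impI)
    fix l assume "l < n"
    have "0 \<le> s\<^sub>1" using diagS \<open>l < n\<close> \<open>0 \<le> s\<^sub>0\<close> by force
    then have "off_diag_row_sum n S l \<le> s\<^sub>1"
      using offS \<open>l < n\<close> by (intro off_diag_row_sum_le) auto
    then have "t * off_diag_row_sum n S l \<le> T * s\<^sub>1"
      using \<open>0 < t\<close> \<open>t \<le> T\<close> off_diag_row_sum_nonneg by (intro mult_mono) auto
    moreover have "off_diag_row_sum n (A + t \<cdot>\<^sub>m S) l \<le> off_diag_row_sum n A l + t * off_diag_row_sum n S l"
      using carrier \<open>0 < t\<close> \<open>l < n\<close> by (intro off_diag_row_sum_add_smult_le) auto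
    ultimately show "off_diag_row_sum n (A + t \<cdot>\<^sub>m S) l \<le> C + T * s\<^sub>1"
      using rowsA[OF \<open>l < n\<close>] by linarith
  qed
  show "length (eigenvalues_sorted A) = n" "length (eigenvalues_sorted (A + t \<cdot>\<^sub>m S)) = n"
    and "k < n \<Longrightarrow> eigenvalues_sorted A ! k < eigenvalues_sorted (A + t \<cdot>\<^sub>m S) ! k"
    and "Suc k < n \<Longrightarrow> eigenvalues_sorted (A + t \<cdot>\<^sub>m S) ! k < eigenvalues_sorted A ! Suc k"
    using perturbed_eigenvalues_interlace[OF A S rowsA' rowsB \<open>C + T * s\<^sub>1 < D\<close> sepA sepB \<open>0 < t\<close>
        \<open>0 \<le> s\<^sub>0\<close> diagS offS small] by simp_all
qed

text \<open>Once c x >= 4 T s1 one has D >= c x / 4, so R / D <= 4 R / (c x); each summand of the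
  threshold for x then secures one of the required inequalities.\<close>

lemma perturbation_bounds_for_large_n:
  fixes c R s\<^sub>0 s\<^sub>1 T x :: real
  defines "D \<equiv> c * x / 2 - T * s\<^sub>1"
  assumes pos: "0 < c" "0 < R" "0 < s\<^sub>0" "0 < s\<^sub>1" "0 < T"
    and x: "4 * T * s\<^sub>1 / c + 4 * R / c + 24 * s\<^sub>1 * R / (c * s\<^sub>0)
              + 96 * s\<^sub>1 * R\<^sup>2 / (c\<^sup>2 * s\<^sub>0) + 16 * R\<^sup>2 / c\<^sup>2 + 1 \<le> x"
  shows "R < D" "2 * s\<^sub>1 * (R / D) + 2 * x * s\<^sub>1 * (R / D)\<^sup>2 < s\<^sub>0" "x * (R / D)\<^sup>2 < 1"
proof -
  have "0 \<le> 4 * T * s\<^sub>1 / c" "0 \<le> 4 * R / c" "0 \<le> 24 * s\<^sub>1 * R / (c * s\<^sub>0)"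
    "0 \<le> 96 * s\<^sub>1 * R\<^sup>2 / (c\<^sup>2 * s\<^sub>0)" "0 \<le> 16 * R\<^sup>2 / c\<^sup>2"
    using pos by auto
  with x have "4 * T * s\<^sub>1 / c \<le> x" "4 * R / c < x" "24 * s\<^sub>1 * R / (c * s\<^sub>0) \<le> x"
    "96 * s\<^sub>1 * R\<^sup>2 / (c\<^sup>2 * s\<^sub>0) \<le> x" "16 * R\<^sup>2 / c\<^sup>2 < x"
    by linarith+
  then have x_ge: "4 * T * s\<^sub>1 \<le> c * x" "4 * R < c * x" "24 * s\<^sub>1 * R \<le> c * s\<^sub>0 * x"
    "96 * s\<^sub>1 * R\<^sup>2 \<le> c\<^sup>2 * s\<^sub>0 * x" "16 * R\<^sup>2 < c\<^sup>2 * x"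
    using pos by (simp_all add: field_simps)
  have "0 < c * x" using x_ge(2) pos by linarith
  then have "0 < x" using pos by (simp add: zero_less_mult_iff)
  define e where "e = 4 * R / (c * x)"
  have "c * x / 4 \<le> D" using x_ge(1) unfolding D_def by simp
  then show "R < D" using x_ge(2) by simp
  then have "0 < D" using pos by simp
  have "R / D \<le> R / (c * x / 4)"
    using \<open>c * x / 4 \<le> D\<close> pos \<open>0 < c * x\<close> by (intro divide_left_mono) auto
  also have "\<dots> = e" by (simp add: e_def)
  finally have "R / D \<le> e" .
  moreover have "0 \<le> R / D" using pos \<open>0 < D\<close> by simp
  ultimately have eps_le: "x * (R / D)\<^sup>2 \<le> x * e\<^sup>2"
    using \<open>0 < x\<close> by (simp add: mult_left_mono power_mono)
  have "2 * s\<^sub>1 * e \<le> s\<^sub>0 / 3" "2 * s\<^sub>1 * (x * e\<^sup>2) \<le> s\<^sub>0 / 3" "x * e\<^sup>2 < 1"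
    using x_ge(3-5) pos \<open>0 < x\<close> unfolding e_def by (simp_all add: field_simps power2_eq_square)
  show "x * (R / D)\<^sup>2 < 1" using eps_le \<open>x * e\<^sup>2 < 1\<close> by linarith
  have "2 * s\<^sub>1 * (R / D) + 2 * x * s\<^sub>1 * (R / D)\<^sup>2 = 2 * s\<^sub>1 * (R / D) + 2 * s\<^sub>1 * (x * (R / D)\<^sup>2)"
    by (simp add: algebra_simps)
  also have "\<dots> \<le> 2 * s\<^sub>1 * e + 2 * s\<^sub>1 * (x * e\<^sup>2)"
    using pos by (intro add_mono mult_left_mono[OF \<open>R / D \<le> e\<close>] mult_left_mono[OF eps_le]) auto
  also have "\<dots> < s\<^sub>0"
    using \<open>2 * s\<^sub>1 * e \<le> s\<^sub>0 / 3\<close> \<open>2 * s\<^sub>1 * (x * e\<^sup>2) \<le> s\<^sub>0 / 3\<close> pos by linarith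
  finally show "2 * s\<^sub>1 * (R / D) + 2 * x * s\<^sub>1 * (R / D)\<^sup>2 < s\<^sub>0" .
qed

lemma eventually_perturbation_bounds:
  fixes c R s\<^sub>0 s\<^sub>1 T :: real
  assumes "0 < c" "0 < R" "0 < s\<^sub>0" "0 < s\<^sub>1" "0 < T"
  shows "eventually (\<lambda>n. R < c * real n / 2 - T * s\<^sub>1
           \<and> 2 * s\<^sub>1 * (R / (c * real n / 2 - T * s\<^sub>1))
               + 2 * real n * s\<^sub>1 * (R / (c * real n / 2 - T * s\<^sub>1))\<^sup>2 < s\<^sub>0
           \<and> real n * (R / (c * real n / 2 - T * s\<^sub>1))\<^sup>2 < 1) sequentially"
proof -
  define X where "X = 4 * T * s\<^sub>1 / c + 4 * R / c + 24 * s\<^sub>1 * R / (c * s\<^sub>0)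
              + 96 * s\<^sub>1 * R\<^sup>2 / (c\<^sup>2 * s\<^sub>0) + 16 * R\<^sup>2 / c\<^sup>2 + 1"
  have "eventually (\<lambda>n. X \<le> real n) sequentially"
    unfolding eventually_sequentially using real_nat_ceiling_ge[of X] by (metis of_nat_mono order_trans)
  then show ?thesis
    by (rule eventually_mono) (use perturbation_bounds_for_large_n[OF assms] in \<open>simp add: X_def\<close>)
qed

theorem theorem2:
  fixes c C s\<^sub>0 s\<^sub>1 T :: real
  assumes "c > 0" "C > 0" "s\<^sub>0 > 0" "s\<^sub>1 > 0" "T > 0"
  shows "\<exists>N::nat. \<forall>n \<ge> N. \<forall>(A::real mat) (S::real mat) (t::real).
     sym_mat n A \<and> pos_def_mat n A
     \<and> (\<forall>k. Suc k < n \<longrightarrow> A $$ (k, k) < A $$ (Suc k, Suc k))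
     \<and> (\<forall>k<n. \<forall>l<n. k \<noteq> l \<longrightarrow> \<bar>A $$ (k, k) - A $$ (l, l)\<bar> \<ge> c * real n)
     \<and> (\<forall>k<n. (\<Sum>l\<in>{0..<n} - {k}. \<bar>A $$ (k, l)\<bar>) \<le> C)
     \<and> sym_mat n S
     \<and> (\<forall>k<n. s\<^sub>0 \<le> S $$ (k, k) \<and> S $$ (k, k) \<le> s\<^sub>1)
     \<and> (\<forall>k<n. \<forall>l<n. k \<noteq> l \<longrightarrow> \<bar>S $$ (k, l)\<bar> \<le> s\<^sub>1 / real n)
     \<and> 0 < t \<and> t \<le> T
     \<longrightarrow> (let lam = eigenvalues_sorted A; mu = eigenvalues_sorted (A + t \<cdot>\<^sub>m S) in
          length lam = n \<and> length mu = n
          \<and> (\<forall>k<n. lam ! k \<le> mu ! k)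
          \<and> (\<forall>k. Suc k < n \<longrightarrow> mu ! k \<le> lam ! Suc k))"
proof -
  have "0 < C + T * s\<^sub>1" using assms by (simp add: add_pos_pos)
  from eventually_perturbation_bounds[OF \<open>c > 0\<close> this \<open>s\<^sub>0 > 0\<close> \<open>s\<^sub>1 > 0\<close> \<open>T > 0\<close>]
  obtain N where N: "\<And>n. N \<le> n \<Longrightarrow> C + T * s\<^sub>1 < c * real n / 2 - T * s\<^sub>1
           \<and> 2 * s\<^sub>1 * ((C + T * s\<^sub>1) / (c * real n / 2 - T * s\<^sub>1))
               + 2 * real n * s\<^sub>1 * ((C + T * s\<^sub>1) / (c * real n / 2 - T * s\<^sub>1))\<^sup>2 < s\<^sub>0
           \<and> real n * ((C + T * s\<^sub>1) / (c * real n / 2 - T * s\<^sub>1))\<^sup>2 < 1"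
    unfolding eventually_sequentially by blast
  show ?thesis
  proof (intro exI[of _ N] allI impI, goal_cases)
    case (1 n A S t)
    then show ?case
      using eigenvalues_interlace_of_diag_gap[of c s\<^sub>0 n A C S s\<^sub>1 t T] N[OF 1(1)] assms
      by (auto simp: Let_def less_imp_le)
  qed
qed

end
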